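(* Let $X,Y$ be polynomial orbit-finite sets and $R\subseteq X\times Y$ a finitely supported binary relation such that for every $x\in X$ the set $\{y: (x,y)\in R\}$ is nonempty. Then there is a finitely supported function $f:X\to Y$ such that $(x,f(x))\in R$ for all $x\in X$.
   Context: Atoms $\mathbb A$ are a countably infinite set; atom automorphisms are bijections of $\mathbb A$. Polynomial orbit-finite sets are built from $\mathbb A$ and singletons by finite products and disjoint unions with the natural action; automorphisms act on subsets elementwise and on functions by $\pi(f)=\pi\circ f\circ\pi^{-1}$. An object is finitely supported if there is a finite tuple $\bar a$ of atoms such that every automorphism fixing $\bar a$ pointwise fixes the object. *)

theory Defs
  imports Main
begin

text \<open>Atoms are modelled by the countably infinite type nat; atom automorphisms
are bijections nat \<Rightarrow> nat.\<close>

text \<open>Syntax of polynomial orbit-finite sets: the atoms, a singleton,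
binary products and binary disjoint unions.\<close>
datatype pof = PAtoms | PUnit | PProd pof pof | PSum pof pof

datatype val = VAtom nat | VUnit | VPair val val | VInl val | VInr val

fun elems :: "pof \<Rightarrow> val set" where
  "elems PAtoms = range VAtom"
| "elems PUnit = {VUnit}"
| "elems (PProd A B) = {VPair x y | x y. x \<in> elems A \<and> y \<in> elems B}"
| "elems (PSum A B) = VInl ` elems A \<union> VInr ` elems B"

fun act :: "(nat \<Rightarrow> nat) \<Rightarrow> val \<Rightarrow> val" where
  "act \<pi> (VAtom a) = VAtom (\<pi> a)"
| "act \<pi> VUnit = VUnit"
| "act \<pi> (VPair x y) = VPair (act \<pi> x) (act \<pi> y)"
| "act \<pi> (VInl x) = VInl (act \<pi> x)"
| "act \<pi> (VInr x) = VInr (act \<pi> x)"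

definition act_set :: "(nat \<Rightarrow> nat) \<Rightarrow> (val \<times> val) set \<Rightarrow> (val \<times> val) set" where
  "act_set \<pi> R = (\<lambda>(x, y). (act \<pi> x, act \<pi> y)) ` R"

definition supports :: "nat set \<Rightarrow> (val \<times> val) set \<Rightarrow> bool" where
  "supports S R \<longleftrightarrow> (\<forall>\<pi>. bij \<pi> \<and> (\<forall>a\<in>S. \<pi> a = a) \<longrightarrow> act_set \<pi> R = R)"

definition fin_supp :: "(val \<times> val) set \<Rightarrow> bool" where
  "fin_supp R \<longleftrightarrow> (\<exists>S. finite S \<and> supports S R)"

text \<open>A function X \<rightarrow> Y is identified with its graph; it is finitely supported
iff its graph is (this is the action \<pi>(f) = \<pi> \<circ> f \<circ> \<pi>\<inverse>).\<close>
definition graph_on :: "val set \<Rightarrow> (val \<Rightarrow> val) \<Rightarrow> (val \<times> val) set" where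
  "graph_on X f = {(x, f x) | x. x \<in> X}"

end

theory Submission
  imports Defs "HOL-Library.Countable" "HOL-Combinatorics.Transposition"
begin

text \<open>Let \<open>S\<close> be a finite support of \<open>R\<close> and let \<open>T\<close> be \<open>S\<close> together with a pool
of fresh atoms. Every \<open>x\<close> has an \<open>R\<close>-witness all of whose atoms lie in those of \<open>x\<close> or
in \<open>T\<close>: transposing each superfluous atom of a witness with an unused atom of the pool
fixes \<open>x\<close> and \<open>S\<close>, hence preserves \<open>R\<close>. Among these witnesses choose the one with the
least canonical code, obtained by renaming each atom of \<open>T\<close> to an even number, the
atom at position \<open>i\<close> of \<open>x\<close> to \<open>2 i + 1\<close>, and then enumerating the countable universe.
Codes are injective on the witnesses of \<open>x\<close> and invariant under every permutation
fixing \<open>T\<close>, so the choice commutes with such permutations and the resulting function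
is supported by \<open>T\<close>.\<close>

instance val :: countable
  by countable_datatype

fun atom_list :: "val \<Rightarrow> nat list" where
  "atom_list (VAtom a) = [a]"
| "atom_list VUnit = []"
| "atom_list (VPair x y) = atom_list x @ atom_list y"
| "atom_list (VInl x) = atom_list x"
| "atom_list (VInr x) = atom_list x"

abbreviation atoms :: "val \<Rightarrow> nat set" where
  "atoms x \<equiv> set (atom_list x)"

fun atom_bound :: "pof \<Rightarrow> nat" where
  "atom_bound PAtoms = 1"
| "atom_bound PUnit = 0"
| "atom_bound (PProd A B) = atom_bound A + atom_bound B"
| "atom_bound (PSum A B) = max (atom_bound A) (atom_bound B)"

lemma length_atom_list_le: "x \<in> elems X \<Longrightarrow> length (atom_list x) \<le> atom_bound X"
  by (induction X arbitrary: x) (auto, fastforce+)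

lemma card_atoms_le: "x \<in> elems X \<Longrightarrow> card (atoms x) \<le> atom_bound X"
  using card_length length_atom_list_le le_trans by blast

lemma atom_list_act [simp]: "atom_list (act \<pi> x) = map \<pi> (atom_list x)"
  by (induction x) auto

lemma act_cong: "(\<And>a. a \<in> atoms x \<Longrightarrow> \<pi> a = \<sigma> a) \<Longrightarrow> act \<pi> x = act \<sigma> x"
  by (induction x) auto

lemma act_act: "act \<pi> (act \<sigma> x) = act (\<pi> \<circ> \<sigma>) x"
  by (induction x) auto

lemma act_id [simp]: "act id x = x"
  by (induction x) auto

lemma act_fixed: "(\<And>a. a \<in> atoms x \<Longrightarrow> \<pi> a = a) \<Longrightarrow> act \<pi> x = x"
  using act_cong[of x \<pi> id] by simp

lemma act_inv_act: "bij \<pi> \<Longrightarrow> act (inv \<pi>) (act \<pi> x) = x"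
  by (simp add: act_act bij_is_inj)

lemma act_act_inv: "bij \<pi> \<Longrightarrow> act \<pi> (act (inv \<pi>) x) = x"
  by (metis act_act act_id bij_is_surj surj_iff)

lemma act_in_elems: "x \<in> elems X \<Longrightarrow> act \<pi> x \<in> elems X"
  by (induction X arbitrary: x) auto

lemma act_inj_on:
  assumes "inj_on \<pi> (atoms x \<union> atoms y)" and "act \<pi> x = act \<pi> y"
  shows "x = y"
  using assms
proof (induction x arbitrary: y)
  case (VAtom a)
  then show ?case by (cases y) (auto dest: inj_onD)
next
  case VUnit
  then show ?case by (cases y) auto
next
  case (VPair x1 x2)
  then obtain y1 y2 where y: "y = VPair y1 y2" by (cases y) auto
  with VPair.prems(1) have "inj_on \<pi> (atoms x1 \<union> atoms y1)" "inj_on \<pi> (atoms x2 \<union> atoms y2)"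
    by (auto intro: inj_on_subset)
  with VPair y show ?case by auto
next
  case (VInl x)
  then show ?case by (cases y) auto
next
  case (VInr x)
  then show ?case by (cases y) auto
qed

lemma inv_fixes: "bij \<pi> \<Longrightarrow> \<forall>a\<in>S. \<pi> a = a \<Longrightarrow> \<forall>a\<in>S. inv \<pi> a = a"
  by (metis bij_is_inj inv_f_f)

lemma supports_iff_act_set_subset:
  "supports S R \<longleftrightarrow> (\<forall>\<pi>. bij \<pi> \<and> (\<forall>a\<in>S. \<pi> a = a) \<longrightarrow> act_set \<pi> R \<subseteq> R)"
  (is "_ \<longleftrightarrow> ?sub")
proof
  assume ?sub
  show "supports S R"
    unfolding supports_def
  proof (intro allI impI)
    fix \<pi> assume \<pi>: "bij \<pi> \<and> (\<forall>a\<in>S. \<pi> a = a)"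
    with \<open>?sub\<close> have "act_set (inv \<pi>) R \<subseteq> R"
      using bij_imp_bij_inv inv_fixes by blast
    then have "act_set \<pi> (act_set (inv \<pi>) R) \<subseteq> act_set \<pi> R"
      by (auto simp: act_set_def)
    moreover have "act_set \<pi> (act_set (inv \<pi>) R) = R"
      using \<pi> act_act_inv by (simp add: act_set_def image_image case_prod_beta)
    ultimately show "act_set \<pi> R = R"
      using \<open>?sub\<close> \<pi> by blast
  qed
qed (auto simp: supports_def)

lemma supports_act_mem:
  assumes "supports S R" and "bij \<pi>" and "\<forall>a\<in>S. \<pi> a = a" and "(x, y) \<in> R"
  shows "(act \<pi> x, act \<pi> y) \<in> R"
  using assms unfolding supports_iff_act_set_subset act_set_def by blast

lemma supports_graph_on:
  assumes "\<And>\<pi> x. bij \<pi> \<Longrightarrow> \<forall>a\<in>T. \<pi> a = a \<Longrightarrow> x \<in> elems X \<Longrightarrow> f (act \<pi> x) = act \<pi> (f x)"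
  shows "supports T (graph_on (elems X) f)"
  unfolding supports_iff_act_set_subset
proof (intro allI impI subsetI)
  fix \<pi> p assume \<pi>: "bij \<pi> \<and> (\<forall>a\<in>T. \<pi> a = a)" and "p \<in> act_set \<pi> (graph_on (elems X) f)"
  then obtain x where "x \<in> elems X" and "p = (act \<pi> x, act \<pi> (f x))"
    by (auto simp: act_set_def graph_on_def)
  with \<pi> assms show "p \<in> graph_on (elems X) f"
    unfolding graph_on_def by (auto intro: act_in_elems)
qed

lemma supports_related_atoms_within:
  assumes supp: "supports S R" and "S \<subseteq> D" and "atoms x \<subseteq> D"
    and "finite A" and "A \<inter> D = {}"
  shows "(x, y) \<in> R \<Longrightarrow> card (atoms y - (D \<union> A)) \<le> card (A - atoms y)
    \<Longrightarrow> \<exists>y'. (x, y') \<in> R \<and> atoms y' \<subseteq> D \<union> A"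
proof (induction "card (atoms y - (D \<union> A))" arbitrary: y)
  case 0
  then show ?case by auto
next
  case (Suc n)
  then obtain b where b: "b \<in> atoms y - (D \<union> A)"
    by (metis card.empty ex_in_conv nat.distinct(1))
  from Suc have "card (A - atoms y) \<noteq> 0" by linarith
  then obtain a where a: "a \<in> A - atoms y"
    by (metis card.empty ex_in_conv)
  let ?y = "act (transpose a b) y"
  have fixes_D: "\<forall>c\<in>D. transpose a b c = c"
    using a b \<open>A \<inter> D = {}\<close> by (auto simp: transpose_def)
  then have "act (transpose a b) x = x"
    using \<open>atoms x \<subseteq> D\<close> by (intro act_fixed) auto
  have atoms_y: "atoms ?y = insert a (atoms y - {b})"
    using a b by (auto simp: transpose_def image_iff)
  have "(x, ?y) \<in> R"
    using supports_act_mem[OF supp, of "transpose a b" x y] Suc.prems(1) fixes_D \<open>S \<subseteq> D\<close>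
      \<open>act (transpose a b) x = x\<close> by auto
  moreover have "atoms ?y - (D \<union> A) = (atoms y - (D \<union> A)) - {b}"
    using atoms_y a by auto
  then have "n = card (atoms ?y - (D \<union> A))"
    using b Suc.hyps(2) by (simp add: card_Diff_singleton)
  moreover have "A - atoms ?y = (A - atoms y) - {a}"
    using b atoms_y by auto
  then have "card (A - atoms ?y) = card (A - atoms y) - 1"
    using a \<open>finite A\<close> by (simp add: card_Diff_singleton)
  ultimately show ?case
    using Suc.hyps Suc.prems(2) by (metis Suc_diff_le diff_Suc_1 diff_le_mono)
qed

definition witnesses_within :: "(val \<times> val) set \<Rightarrow> nat set \<Rightarrow> val \<Rightarrow> val set" where
  "witnesses_within R T x = {y. (x, y) \<in> R \<and> atoms y \<subseteq> atoms x \<union> T}"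

lemma witnesses_within_nonempty:
  assumes "supports S R" and "S \<subseteq> T" and "finite T" and "(x, y) \<in> R"
    and room: "card (atoms x) + card (atoms y) \<le> card (T - S)"
  shows "witnesses_within R T x \<noteq> {}"
proof -
  define D where "D = atoms x \<union> S"
  define A where "A = T - S - atoms x"
  have "finite A" and "A \<inter> D = {}"
    using \<open>finite T\<close> by (auto simp: A_def D_def)
  have "card (T - S) \<le> card A + card (atoms x)"
    using card_mono[of "A \<union> atoms x" "T - S"] card_Un_le[of A "atoms x"] \<open>finite A\<close>
    by (force simp: A_def)
  then have "card (atoms y) \<le> card A"
    using room by linarith
  have "card (atoms y - (D \<union> A)) \<le> card (atoms y - A)"
    by (intro card_mono) auto
  also have "\<dots> = card (atoms y) - card (A \<inter> atoms y)"
    by (simp add: card_Diff_subset_Int Int_commute)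
  also have "\<dots> \<le> card A - card (A \<inter> atoms y)"
    using \<open>card (atoms y) \<le> card A\<close> by linarith
  also have "\<dots> = card (A - atoms y)"
    using \<open>finite A\<close> by (simp add: card_Diff_subset_Int)
  finally obtain y' where "(x, y') \<in> R" and "atoms y' \<subseteq> D \<union> A"
    using supports_related_atoms_within[OF \<open>supports S R\<close> _ _ \<open>finite A\<close> \<open>A \<inter> D = {}\<close> \<open>(x, y) \<in> R\<close>]
    by (auto simp: D_def)
  moreover have "D \<union> A \<subseteq> atoms x \<union> T"
    using \<open>S \<subseteq> T\<close> by (auto simp: D_def A_def)
  ultimately show ?thesis
    by (auto simp: witnesses_within_def)
qed

lemma witnesses_within_act_subset:
  assumes "supports S R" and "S \<subseteq> T" and "bij \<pi>" and "\<forall>a\<in>T. \<pi> a = a"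
  shows "act \<pi> ` witnesses_within R T x \<subseteq> witnesses_within R T (act \<pi> x)"
proof (rule image_subsetI)
  fix y assume "y \<in> witnesses_within R T x"
  then have "(x, y) \<in> R" and "atoms y \<subseteq> atoms x \<union> T"
    by (auto simp: witnesses_within_def)
  then have "(act \<pi> x, act \<pi> y) \<in> R" and "atoms (act \<pi> y) \<subseteq> atoms (act \<pi> x) \<union> T"
    using supports_act_mem[OF assms(1,3)] assms(2,4) by (blast, auto)
  then show "act \<pi> y \<in> witnesses_within R T (act \<pi> x)"
    by (simp add: witnesses_within_def)
qed

lemma witnesses_within_act:
  assumes "supports S R" and "S \<subseteq> T" and "bij \<pi>" and "\<forall>a\<in>T. \<pi> a = a"
  shows "witnesses_within R T (act \<pi> x) = act \<pi> ` witnesses_within R T x"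
proof
  have "act (inv \<pi>) ` witnesses_within R T (act \<pi> x) \<subseteq> witnesses_within R T x"
    using witnesses_within_act_subset[OF assms(1,2) bij_imp_bij_inv inv_fixes, of \<pi> "act \<pi> x"] assms(3,4)
    by (simp add: act_inv_act)
  then have "act \<pi> ` act (inv \<pi>) ` witnesses_within R T (act \<pi> x) \<subseteq> act \<pi> ` witnesses_within R T x"
    by (rule image_mono)
  then show "witnesses_within R T (act \<pi> x) \<subseteq> act \<pi> ` witnesses_within R T x"
    by (simp add: image_image act_act_inv[OF assms(3)])
qed (rule witnesses_within_act_subset[OF assms])

definition atom_index :: "val \<Rightarrow> nat \<Rightarrow> nat" where
  "atom_index x a = (LEAST i. i < length (atom_list x) \<and> atom_list x ! i = a)"

lemma atom_list_nth_atom_index: "a \<in> atoms x \<Longrightarrow> atom_list x ! atom_index x a = a"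
  unfolding atom_index_def by (rule LeastI2_ex) (auto simp: in_set_conv_nth)

lemma atom_index_act: "inj \<pi> \<Longrightarrow> atom_index (act \<pi> x) (\<pi> a) = atom_index x a"
  unfolding atom_index_def atom_list_act
  by (rule arg_cong[where f = Least]) (auto simp: fun_eq_iff inj_eq)

definition canon_rename :: "nat set \<Rightarrow> val \<Rightarrow> nat \<Rightarrow> nat" where
  "canon_rename T x a = (if a \<in> T then 2 * a else 2 * atom_index x a + 1)"

lemma inj_on_canon_rename: "inj_on (canon_rename T x) (atoms x \<union> T)"
proof
  fix a b assume a: "a \<in> atoms x \<union> T" and b: "b \<in> atoms x \<union> T"
    and eq: "canon_rename T x a = canon_rename T x b"
  show "a = b"
  proof (cases "a \<in> T"; cases "b \<in> T")
    assume "a \<notin> T" "b \<notin> T"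
    then have "atom_index x a = atom_index x b"
      using eq by (simp add: canon_rename_def)
    then show ?thesis
      using a b \<open>a \<notin> T\<close> \<open>b \<notin> T\<close> atom_list_nth_atom_index by (metis Un_iff)
  next
    assume "a \<in> T" "b \<notin> T"
    then show ?thesis
      using eq by (simp add: canon_rename_def) presburger
  next
    assume "a \<notin> T" "b \<in> T"
    then show ?thesis
      using eq by (simp add: canon_rename_def) presburger
  qed (use eq in \<open>simp add: canon_rename_def\<close>)
qed

lemma canon_rename_act:
  assumes "inj \<pi>" and "\<forall>a\<in>T. \<pi> a = a"
  shows "canon_rename T (act \<pi> x) (\<pi> a) = canon_rename T x a"
proof (cases "a \<in> T")
  case False
  then have "\<pi> a \<notin> T"
    using assms by (metis injD)
  with False show ?thesis
    using atom_index_act[OF assms(1)] by (simp add: canon_rename_def)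
qed (use assms in \<open>simp add: canon_rename_def\<close>)

definition canon_code :: "nat set \<Rightarrow> val \<Rightarrow> val \<Rightarrow> nat" where
  "canon_code T x y = to_nat (act (canon_rename T x) y)"

lemma inj_on_canon_code: "inj_on (canon_code T x) (witnesses_within R T x)"
proof
  fix y z assume "y \<in> witnesses_within R T x" and "z \<in> witnesses_within R T x"
    and "canon_code T x y = canon_code T x z"
  then have "act (canon_rename T x) y = act (canon_rename T x) z"
    and "atoms y \<union> atoms z \<subseteq> atoms x \<union> T"
    by (auto simp: canon_code_def witnesses_within_def)
  then show "y = z"
    using act_inj_on inj_on_subset[OF inj_on_canon_rename] by blast
qed

lemma canon_code_act:
  assumes "inj \<pi>" and "\<forall>a\<in>T. \<pi> a = a"
  shows "canon_code T (act \<pi> x) (act \<pi> y) = canon_code T x y"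
proof -
  have "act (canon_rename T (act \<pi> x) \<circ> \<pi>) y = act (canon_rename T x) y"
    using canon_rename_act[OF assms] by (intro act_cong) simp
  then show ?thesis
    by (simp add: canon_code_def act_act)
qed

lemma arg_min_image:
  fixes g :: "'a \<Rightarrow> nat" and g' :: "'b \<Rightarrow> nat"
  assumes "inj_on g C" and "C \<noteq> {}" and "\<And>z. z \<in> C \<Longrightarrow> g' (h z) = g z"
  shows "arg_min g' (\<lambda>z. z \<in> h ` C) = h (arg_min g (\<lambda>z. z \<in> C))"
proof -
  obtain y where "y \<in> C"
    using \<open>C \<noteq> {}\<close> by blast
  let ?m = "arg_min g (\<lambda>z. z \<in> C)"
  have m: "?m \<in> C" "\<And>z. z \<in> C \<Longrightarrow> g ?m \<le> g z"
    using arg_min_nat_lemma[of "\<lambda>z. z \<in> C" y g] \<open>y \<in> C\<close> by auto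
  obtain z where z: "z \<in> C" "arg_min g' (\<lambda>z. z \<in> h ` C) = h z"
    and z_min: "\<And>w. w \<in> C \<Longrightarrow> g' (h z) \<le> g' (h w)"
    using arg_min_nat_lemma[of "\<lambda>z. z \<in> h ` C" "h y" g'] \<open>y \<in> C\<close> by auto
  have "g z = g ?m"
    using z_min[of ?m] m z(1) assms(3) by (simp add: le_antisym)
  then show ?thesis
    using z m(1) \<open>inj_on g C\<close> by (simp add: inj_on_eq_iff)
qed

definition choose_witness :: "(val \<times> val) set \<Rightarrow> nat set \<Rightarrow> val \<Rightarrow> val" where
  "choose_witness R T x = arg_min (canon_code T x) (\<lambda>y. y \<in> witnesses_within R T x)"

lemma choose_witness_in:
  assumes "witnesses_within R T x \<noteq> {}"
  shows "choose_witness R T x \<in> witnesses_within R T x"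
proof -
  obtain y where "y \<in> witnesses_within R T x"
    using assms by blast
  then show ?thesis
    unfolding choose_witness_def by (rule arg_min_natI)
qed

lemma choose_witness_act:
  assumes "supports S R" and "S \<subseteq> T" and "bij \<pi>" and "\<forall>a\<in>T. \<pi> a = a"
    and "witnesses_within R T x \<noteq> {}"
  shows "choose_witness R T (act \<pi> x) = act \<pi> (choose_witness R T x)"
  unfolding choose_witness_def witnesses_within_act[OF assms(1-4)]
  using arg_min_image[OF inj_on_canon_code assms(5)] canon_code_act[OF bij_is_inj[OF assms(3)] assms(4)]
  by blast

theorem mainTheorem9:
  fixes X Y :: pof and R :: "(val \<times> val) set"
  assumes "R \<subseteq> elems X \<times> elems Y"
    and "fin_supp R"
    and "\<forall>x\<in>elems X. \<exists>y. (x, y) \<in> R"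
  shows "\<exists>f. (\<forall>x\<in>elems X. f x \<in> elems Y \<and> (x, f x) \<in> R)
             \<and> fin_supp (graph_on (elems X) f)"
proof -
  obtain S where "finite S" and "supports S R"
    using assms(2) by (auto simp: fin_supp_def)
  then have "infinite (- S)"
    by simp
  then obtain F where "finite F" and card_F: "card F = atom_bound X + atom_bound Y" and "F \<subseteq> - S"
    using infinite_arbitrarily_large by blast
  define T where "T = S \<union> F"
  have "finite T" and "S \<subseteq> T" and "T - S = F"
    using \<open>finite S\<close> \<open>finite F\<close> \<open>F \<subseteq> - S\<close> by (auto simp: T_def)
  have witness: "witnesses_within R T x \<noteq> {}" if x: "x \<in> elems X" for x
  proof -
    obtain y where "(x, y) \<in> R"
      using assms(3) x by blast
    with assms(1) have "card (atoms x) + card (atoms y) \<le> card (T - S)"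
      using card_atoms_le[OF x] card_atoms_le[of y Y] card_F \<open>T - S = F\<close> by auto
    then show ?thesis
      using witnesses_within_nonempty[OF \<open>supports S R\<close> \<open>S \<subseteq> T\<close> \<open>finite T\<close> \<open>(x, y) \<in> R\<close>] by blast
  qed
  define f where "f = choose_witness R T"
  have "\<forall>x\<in>elems X. f x \<in> elems Y \<and> (x, f x) \<in> R"
    using choose_witness_in[OF witness] assms(1) by (auto simp: f_def witnesses_within_def)
  moreover have "supports T (graph_on (elems X) f)"
    unfolding f_def by (intro supports_graph_on choose_witness_act[OF \<open>supports S R\<close> \<open>S \<subseteq> T\<close>] witness)
  ultimately show ?thesis
    using \<open>finite T\<close> unfolding fin_supp_def by blast
qed

end
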